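(* Let $F$ be the joint distribution function of $(X_1,\dots,X_{n_s})$. For every $s>0$, $F^{1/s}$ is again a distribution function on $(0,\infty)^{n_s}$; specifically, $F^{1/s}$ is the joint distribution function of the same model with tilting parameters $\theta_k/s^{1/\alpha}$ in place of $\theta_k$ and weights $\omega_{kj}/s$ in place of $\omega_{kj}$ (all other parameters unchanged). Consequently $(X_1,\dots,X_{n_s})$ is max-infinitely divisible.
   Context: Standing model. Fix $\alpha\in(0,1)$, $\alpha_0>0$, $\tau>0$, an integer $K\ge1$ and tilting parameters $\theta_1,\dots,\theta_K\ge0$. Fix locations $\boldsymbol s_1,\dots,\boldsymbol s_{n_s}$ and nonnegative weights $\omega_{kj}$ with $\{k:\omega_{kj}\ne0\}\neq\emptyset$ for every $j$. Let $Z_1,\dots,Z_K$ be independent positive random variables with $E[e^{-sZ_k}]=\exp[-\{(\theta_k+s)^\alpha-\theta_k^\alpha\}]$, $s\ge0$. Let $\epsilon_1,\dots,\epsilon_{n_s}$ be i.i.d., independent of the $Z_k$, with $\Pr(\epsilon_j\le x)=\exp\{-(x/\tau)^{-1/\alpha_0}\}$, $x>0$. Define $X_j=\epsilon_j\big(\sum_{k=1}^K\omega_{kj}^{1/\alpha}Z_k\big)^{\alpha_0}$. A random vector with distribution function $F$ is max-infinitely divisible if $F^{1/m}$ is a distribution function for every integer $m\ge1$. *)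

theory Defs
  imports "HOL-Probability.Probability"
begin

text \<open>Indices are 0-based: k ranges over {..<K}, j over {..<ns}.\<close>

definition Xvar :: "real \<Rightarrow> real \<Rightarrow> nat \<Rightarrow> (nat \<Rightarrow> nat \<Rightarrow> real)
    \<Rightarrow> (nat \<Rightarrow> 'a \<Rightarrow> real) \<Rightarrow> (nat \<Rightarrow> 'a \<Rightarrow> real) \<Rightarrow> nat \<Rightarrow> 'a \<Rightarrow> real" where
  "Xvar \<alpha> \<alpha>0 K \<omega> Z eps j w =
     eps j w * (\<Sum>k<K. \<omega> k j powr (1 / \<alpha>) * Z k w) powr \<alpha>0"

definition model :: "'a measure \<Rightarrow> real \<Rightarrow> real \<Rightarrow> real \<Rightarrow> nat \<Rightarrow> (nat \<Rightarrow> real)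
    \<Rightarrow> nat \<Rightarrow> (nat \<Rightarrow> nat \<Rightarrow> real) \<Rightarrow> (nat \<Rightarrow> 'a \<Rightarrow> real) \<Rightarrow> (nat \<Rightarrow> 'a \<Rightarrow> real) \<Rightarrow> bool" where
  "model M \<alpha> \<alpha>0 \<tau> K \<theta> ns \<omega> Z eps \<longleftrightarrow>
     prob_space M \<and>
     (\<forall>k<K. Z k \<in> borel_measurable M) \<and>
     (\<forall>j<ns. eps j \<in> borel_measurable M) \<and>
     prob_space.indep_vars M (\<lambda>_. borel)
        (\<lambda>i. case i of Inl k \<Rightarrow> Z k | Inr j \<Rightarrow> eps j) ({..<K} <+> {..<ns}) \<and>
     (\<forall>k<K. (AE w in M. Z k w > 0)) \<and>
     (\<forall>k<K. \<forall>t\<ge>0. integral\<^sup>L M (\<lambda>w. exp (- t * Z k w))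
                    = exp (- ((\<theta> k + t) powr \<alpha> - \<theta> k powr \<alpha>))) \<and>
     (\<forall>j<ns. \<forall>x>0. measure M {w \<in> space M. eps j w \<le> x}
                    = exp (- ((x / \<tau>) powr (- 1 / \<alpha>0))))"

definition joint_cdf :: "'a measure \<Rightarrow> (nat \<Rightarrow> 'a \<Rightarrow> real) \<Rightarrow> nat \<Rightarrow> (nat \<Rightarrow> real) \<Rightarrow> real" where
  "joint_cdf M Y n x = measure M {w \<in> space M. \<forall>j<n. Y j w \<le> x j}"

definition is_joint_cdf :: "nat \<Rightarrow> ((nat \<Rightarrow> real) \<Rightarrow> real) \<Rightarrow> bool" where
  "is_joint_cdf n G \<longleftrightarrow>
     (\<exists>(N :: (nat \<Rightarrow> real) measure) Y. prob_space N \<and> (\<forall>j<n. Y j \<in> borel_measurable N) \<and>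
        (\<forall>x. G x = joint_cdf N Y n x))"

definition max_inf_div :: "nat \<Rightarrow> ((nat \<Rightarrow> real) \<Rightarrow> real) \<Rightarrow> bool" where
  "max_inf_div n G \<longleftrightarrow> (\<forall>m::nat. m \<ge> 1 \<longrightarrow> is_joint_cdf n (\<lambda>x. G x powr (1 / real m)))"

end

theory Submission
  imports Defs "HOL-Complex_Analysis.Complex_Analysis"
begin

text \<open>
  Conditionally on the Z_k the X_j are independent Frechet variables, so for x > 0
  F(x) = E exp(- \<Sum>_k t_k(x) Z_k) = exp(- \<Sum>_k ((\<theta>_k + t_k(x))^\<alpha> - \<theta>_k^\<alpha>)) with
  t_k(x) = \<Sum>_j \<omega>_kj^(1/\<alpha>) (x_j/\<tau>)^(-1/\<alpha>0). Replacing \<omega> by \<omega>/s and \<theta> by \<theta>/s^(1/\<alpha>)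
  divides t_k and \<theta>_k by s^(1/\<alpha>), hence every exponent by s, which yields F^(1/s).
  A model with the new tilting parameters exists because tilting the law of Z_k by the density
  proportional to exp((\<theta> - \<theta>') z) gives the law with parameter \<theta>'. For \<theta>' < \<theta> this needs the
  exponential moments E exp(r Z) for r < \<theta>, which come from analytically continuing the
  Laplace transform beyond the origin.
\<close>

section \<open>Analytic continuation of power series\<close>

lemma has_fps_expansion_if_sums_on_segment:
  fixes G :: "complex \<Rightarrow> complex" and a :: "nat \<Rightarrow> complex" and R T :: real
  assumes hol: "G holomorphic_on ball 0 R" and T: "0 < T" "T < R"
    and sums_seg: "\<And>u. 0 \<le> u \<Longrightarrow> u \<le> T \<Longrightarrow> (\<lambda>n. a n * of_real u ^ n) sums G (of_real u)"
  shows "G has_fps_expansion Abs_fps a"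
proof -
  define A where "A = Abs_fps a"
  have "summable (\<lambda>n. fps_nth A n * of_real T ^ n)"
    using sums_seg[of T] T by (auto simp: A_def sums_iff)
  from conv_radius_geI[OF this] have rad: "fps_conv_radius A \<ge> T"
    using T by (simp add: fps_conv_radius_def)
  have "eval_fps A w - G w = 0" if w: "w \<in> ball 0 T" for w
  proof (rule analytic_continuation[where f = "\<lambda>w. eval_fps A w - G w" and S = "ball 0 T"
        and U = "of_real ` {0<..<T}" and \<xi> = 0])
    have "ball 0 T \<subseteq> eball 0 (fps_conv_radius A)"
      by (auto intro!: less_le_trans[OF _ rad])
    moreover have "ball 0 T \<subseteq> ball (0::complex) R" using T by auto
    ultimately show "(\<lambda>w. eval_fps A w - G w) holomorphic_on ball 0 T"
      by (intro holomorphic_intros holomorphic_on_subset[OF hol]) auto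
    show "(0::complex) islimpt of_real ` {0<..<T}"
    proof (rule islimpt_approachable[THEN iffD2], intro allI impI)
      fix e :: real assume "e > 0"
      then show "\<exists>x'\<in>complex_of_real ` {0<..<T}. x' \<noteq> 0 \<and> dist x' 0 < e"
        using T by (intro bexI[of _ "of_real (min (T/2) (e/2))"]) auto
    qed
    fix v assume "v \<in> complex_of_real ` {0<..<T}"
    then obtain u where "v = of_real u" "0 < u" "u < T" by auto
    then show "eval_fps A v - G v = 0"
      using sums_seg[of u] by (auto simp: A_def eval_fps_def sums_iff)
  qed (use T w in auto)
  moreover have "eventually (\<lambda>w. w \<in> ball (0::complex) T) (nhds 0)"
    using T by (intro eventually_nhds_in_open) auto
  ultimately have "\<forall>\<^sub>F w in nhds 0. eval_fps A w = G w"
    by (auto elim!: eventually_mono)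
  moreover have "0 < fps_conv_radius A" using rad T by (meson ereal_less(2) less_le_trans)
  ultimately show ?thesis by (simp add: has_fps_expansion_def A_def)
qed

lemma sums_on_ball_if_sums_on_segment:
  fixes G :: "complex \<Rightarrow> complex" and a :: "nat \<Rightarrow> complex" and R T :: real
  assumes hol: "G holomorphic_on ball 0 R" and "0 < T" "T < R"
    and "\<And>u. 0 \<le> u \<Longrightarrow> u \<le> T \<Longrightarrow> (\<lambda>n. a n * of_real u ^ n) sums G (of_real u)"
    and z: "z \<in> ball 0 R"
  shows "(\<lambda>n. a n * z ^ n) sums G z"
proof -
  have "(\<lambda>n. (deriv ^^ n) G 0 / fact n * (z - 0) ^ n) sums G z"
    using z by (intro holomorphic_power_series[OF hol]) auto
  then show ?thesis
    using fps_nth_fps_expansion[OF has_fps_expansion_if_sums_on_segment[OF assms(1-4)]] by simp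
qed

lemma sums_exp_diff_powr_extend:
  fixes a :: "nat \<Rightarrow> real" and c R T \<alpha> u :: real
  assumes T: "0 < T" "T < R"
    and sums_seg: "\<And>u. 0 \<le> u \<Longrightarrow> u \<le> T \<Longrightarrow> (\<lambda>n. a n * u ^ n) sums exp (c - (R - u) powr \<alpha>)"
    and u: "0 \<le> u" "u < R"
  shows "(\<lambda>n. a n * u ^ n) sums exp (c - (R - u) powr \<alpha>)"
proof -
  define G where "G z = exp (of_real c - (of_real R - z) powr of_real \<alpha>)" for z :: complex
  have G_of_real: "G (of_real v) = of_real (exp (c - (R - v) powr \<alpha>))" if "v < R" for v
    using that by (simp add: G_def powr_of_real flip: of_real_diff exp_of_real)
  have "G holomorphic_on ball 0 R"
    unfolding G_def
  proof (intro holomorphic_intros)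
    fix z :: complex assume "z \<in> ball 0 R"
    then have "Re z < R" using complex_Re_le_cmod[of z] by (auto simp: dist_norm)
    then show "of_real R - z \<notin> \<real>\<^sub>\<le>\<^sub>0" by (auto simp: complex_nonpos_Reals_iff)
  qed
  then have "(\<lambda>n. of_real (a n) * of_real u ^ n) sums G (of_real u)"
  proof (rule sums_on_ball_if_sums_on_segment[OF _ T])
    fix v :: real assume "0 \<le> v" "v \<le> T"
    then have "(\<lambda>n. of_real (a n * v ^ n)) sums G (of_real v)"
      using sums_seg[of v] G_of_real[of v] T by (simp only: sums_of_real_iff)
    then show "(\<lambda>n. of_real (a n) * of_real v ^ n) sums G (of_real v)" by simp
  qed (use u in auto)
  then have "(\<lambda>n. of_real (a n * u ^ n)) sums (of_real (exp (c - (R - u) powr \<alpha>)) :: complex)"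
    using G_of_real[of u] u by simp
  then show ?thesis by (simp only: sums_of_real_iff)
qed

section \<open>Exponentially tilted stable laws\<close>

lemma power_mult_exp_le_fact:
  fixes z :: real assumes "0 \<le> z"
  shows "z ^ n * exp (- z) \<le> fact n"
proof -
  have "z ^ n / fact n = (\<lambda>k. z ^ k /\<^sub>R fact k) n" by (simp add: divide_inverse_commute)
  also have "\<dots> \<le> (\<Sum>k<Suc n. z ^ k /\<^sub>R fact k)"
    using assms by (intro member_le_sum) auto
  also have "\<dots> \<le> exp z"
    using sum_le_suminf[OF sums_summable[OF exp_converges[of z]], of "{..<Suc n}"] assms
      sums_unique[OF exp_converges[of z]] by auto
  finally show ?thesis by (simp add: exp_minus field_simps)
qed

lemma nn_integral_exp_eq_suminf:
  fixes \<mu> :: "'a measure" and Z :: "'a \<Rightarrow> real" and u :: real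
  assumes [measurable]: "Z \<in> borel_measurable \<mu>" and "AE w in \<mu>. 0 \<le> Z w" and "0 \<le> u"
  shows "(\<integral>\<^sup>+w. ennreal (exp ((u - 1) * Z w)) \<partial>\<mu>)
       = (\<Sum>n. \<integral>\<^sup>+w. ennreal (u ^ n / fact n * (Z w ^ n * exp (- Z w))) \<partial>\<mu>)"
proof -
  have "(\<integral>\<^sup>+w. ennreal (exp ((u - 1) * Z w)) \<partial>\<mu>)
      = (\<integral>\<^sup>+w. (\<Sum>n. ennreal (u ^ n / fact n * (Z w ^ n * exp (- Z w)))) \<partial>\<mu>)"
  proof (rule nn_integral_cong_AE)
    show "AE w in \<mu>. ennreal (exp ((u - 1) * Z w)) = (\<Sum>n. ennreal (u ^ n / fact n * (Z w ^ n * exp (- Z w))))"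
      using assms(2)
    proof eventually_elim
      case (elim w)
      have "(\<lambda>n. (u * Z w) ^ n /\<^sub>R fact n * exp (- Z w)) sums (exp (u * Z w) * exp (- Z w))"
        by (intro sums_mult2 exp_converges)
      moreover have "(\<lambda>n. (u * Z w) ^ n /\<^sub>R fact n * exp (- Z w))
          = (\<lambda>n. u ^ n / fact n * (Z w ^ n * exp (- Z w)))"
        by (simp add: power_mult_distrib field_simps)
      moreover have "exp (u * Z w) * exp (- Z w) = exp ((u - 1) * Z w)"
        by (simp add: mult_exp_exp algebra_simps)
      ultimately have "(\<lambda>n. u ^ n / fact n * (Z w ^ n * exp (- Z w))) sums exp ((u - 1) * Z w)"
        by simp
      then show ?case
        using elim \<open>0 \<le> u\<close> by (intro suminf_ennreal_eq[symmetric]) auto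
    qed
  qed
  also have "\<dots> = (\<Sum>n. \<integral>\<^sup>+w. ennreal (u ^ n / fact n * (Z w ^ n * exp (- Z w))) \<partial>\<mu>)"
    by (rule nn_integral_suminf) measurable
  finally show ?thesis .
qed

definition tilted_stable_law :: "real \<Rightarrow> real \<Rightarrow> real measure \<Rightarrow> bool" where
  "tilted_stable_law \<alpha> \<theta> \<mu> \<longleftrightarrow> prob_space \<mu> \<and> sets \<mu> = sets borel \<and> (AE z in \<mu>. 0 < z) \<and>
     (\<forall>t\<ge>0. (\<integral>z. exp (- t * z) \<partial>\<mu>) = exp (- ((\<theta> + t) powr \<alpha> - \<theta> powr \<alpha>)))"

lemma nn_integral_exp_power_series:
  assumes "finite_measure \<mu>" "sets \<mu> = sets borel" and nonneg: "AE z in \<mu>. 0 \<le> z"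
  obtains a :: "nat \<Rightarrow> real" where "\<And>n. 0 \<le> a n"
    and "\<And>u. 0 \<le> u \<Longrightarrow> (\<integral>\<^sup>+z. ennreal (exp ((u - 1) * z)) \<partial>\<mu>) = (\<Sum>n. ennreal (a n * u ^ n))"
proof
  interpret finite_measure \<mu> by fact
  define a where "a n = (\<integral>z. z ^ n * exp (- z) \<partial>\<mu>) / fact n" for n
  show "0 \<le> a n" for n
    unfolding a_def by (intro divide_nonneg_pos integral_nonneg_AE) (use nonneg in auto)
  fix u :: real assume u: "0 \<le> u"
  have "integrable \<mu> (\<lambda>z. z ^ n * exp (- z))" for n
    by (rule integrable_const_bound[where B = "fact n"])
      (use nonneg assms(2) in \<open>auto elim!: eventually_mono simp: abs_mult intro!: power_mult_exp_le_fact\<close>)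
  then have "(\<integral>\<^sup>+z. ennreal (u ^ n / fact n * (z ^ n * exp (- z))) \<partial>\<mu>) = ennreal (a n * u ^ n)" for n
    using nonneg u by (subst nn_integral_eq_integral) (auto simp: a_def mult.commute elim!: eventually_mono)
  moreover have "(\<integral>\<^sup>+z. ennreal (exp ((u - 1) * z)) \<partial>\<mu>)
      = (\<Sum>n. \<integral>\<^sup>+z. ennreal (u ^ n / fact n * (z ^ n * exp (- z))) \<partial>\<mu>)"
    by (rule nn_integral_exp_eq_suminf[OF measurable_ident_sets[OF assms(2)] nonneg u])
  ultimately show "(\<integral>\<^sup>+z. ennreal (exp ((u - 1) * z)) \<partial>\<mu>) = (\<Sum>n. ennreal (a n * u ^ n))"
    by simp
qed

lemma tilted_stable_law_nn_laplace:
  assumes law: "tilted_stable_law \<alpha> \<theta> \<mu>" and "0 \<le> t"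
  shows "(\<integral>\<^sup>+z. ennreal (exp (- t * z)) \<partial>\<mu>) = ennreal (exp (\<theta> powr \<alpha> - (\<theta> + t) powr \<alpha>))"
proof -
  interpret prob_space \<mu> using law by (simp add: tilted_stable_law_def)
  have "integrable \<mu> (\<lambda>z. exp (- t * z))"
    by (rule integrable_const_bound[where B = 1])
      (use law \<open>0 \<le> t\<close> in \<open>auto elim!: eventually_mono simp: tilted_stable_law_def\<close>)
  then show ?thesis
    using law \<open>0 \<le> t\<close> by (subst nn_integral_eq_integral) (auto simp: tilted_stable_law_def)
qed

text \<open>
  For 0 < r < \<theta>: on [0, 1] the function u \<mapsto> E exp((u - 1) Z) is a power series with nonnegative
  coefficients and agrees with exp(\<theta>^\<alpha> - (\<theta> + 1 - u)^\<alpha>), which is analytic on the disc of radius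
  \<theta> + 1; by analytic continuation the series converges to it at u = 1 + r as well.
\<close>

lemma tilted_stable_law_exp_moment:
  assumes law: "tilted_stable_law \<alpha> \<theta> \<mu>" and r: "r < \<theta> \<or> r \<le> 0"
  shows "(\<integral>\<^sup>+z. ennreal (exp (r * z)) \<partial>\<mu>) = ennreal (exp (\<theta> powr \<alpha> - (\<theta> - r) powr \<alpha>))"
proof (cases "r \<le> 0")
  case True
  then show ?thesis using tilted_stable_law_nn_laplace[OF law, of "- r"] by simp
next
  case False
  with r have r: "0 < r" "r < \<theta>" by auto
  interpret prob_space \<mu> using law by (simp add: tilted_stable_law_def)
  have "sets \<mu> = sets borel" "AE z in \<mu>. 0 \<le> z"
    using law by (auto simp: tilted_stable_law_def elim!: eventually_mono)
  then obtain a where a_nonneg: "\<And>n. 0 \<le> a n" and series: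
    "\<And>u. 0 \<le> u \<Longrightarrow> (\<integral>\<^sup>+z. ennreal (exp ((u - 1) * z)) \<partial>\<mu>) = (\<Sum>n. ennreal (a n * u ^ n))"
    using nn_integral_exp_power_series[OF finite_measure_axioms] by blast
  have sums_unit: "(\<lambda>n. a n * u ^ n) sums exp (\<theta> powr \<alpha> - (\<theta> + 1 - u) powr \<alpha>)"
    if "0 \<le> u" "u \<le> 1" for u
  proof -
    have "(\<Sum>n. ennreal (a n * u ^ n)) = ennreal (exp (\<theta> powr \<alpha> - (\<theta> + 1 - u) powr \<alpha>))"
      using series[of u] tilted_stable_law_nn_laplace[OF law, of "1 - u"] that
      by (simp add: algebra_simps)
    then have "(\<lambda>n. ennreal (a n * u ^ n)) sums ennreal (exp (\<theta> powr \<alpha> - (\<theta> + 1 - u) powr \<alpha>))"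
      by (metis summableI summable_sums)
    then show ?thesis using a_nonneg that by (subst (asm) sums_ennreal) auto
  qed
  have "(\<lambda>n. a n * (1 + r) ^ n) sums exp (\<theta> powr \<alpha> - (\<theta> + 1 - (1 + r)) powr \<alpha>)"
    using r by (intro sums_exp_diff_powr_extend[where T = 1, OF _ _ sums_unit]) auto
  then have "(\<Sum>n. ennreal (a n * (1 + r) ^ n)) = ennreal (exp (\<theta> powr \<alpha> - (\<theta> - r) powr \<alpha>))"
    using a_nonneg r by (intro sums_unique[symmetric]) (auto simp: sums_ennreal)
  then show ?thesis using series[of "1 + r"] r by simp
qed

lemma tilted_stable_law_retilt:
  assumes law: "tilted_stable_law \<alpha> \<theta> \<mu>" and "0 \<le> \<theta>'" "0 < \<theta> \<Longrightarrow> 0 < \<theta>'"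
  shows "tilted_stable_law \<alpha> \<theta>'
           (density \<mu> (\<lambda>z. ennreal (exp ((\<theta> - \<theta>') * z - (\<theta> powr \<alpha> - \<theta>' powr \<alpha>)))))"
    (is "tilted_stable_law \<alpha> \<theta>' ?\<rho>")
proof -
  interpret prob_space \<mu> using law by (simp add: tilted_stable_law_def)
  have sets_\<mu>: "sets \<mu> = sets borel" and pos: "AE z in \<mu>. 0 < z"
    using law by (auto simp: tilted_stable_law_def)
  have [measurable]: "(\<lambda>z. z) \<in> borel_measurable \<mu>"
    using measurable_ident_sets[OF sets_\<mu>] .
  have laplace_nn: "(\<integral>\<^sup>+z. ennreal (exp (- t * z)) \<partial>?\<rho>) = ennreal (exp (- ((\<theta>' + t) powr \<alpha> - \<theta>' powr \<alpha>)))"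
    if "0 \<le> t" for t
  proof -
    have "(\<integral>\<^sup>+z. ennreal (exp (- t * z)) \<partial>?\<rho>)
        = (\<integral>\<^sup>+z. ennreal (exp ((\<theta> - \<theta>' - t) * z)) * ennreal (exp (\<theta>' powr \<alpha> - \<theta> powr \<alpha>)) \<partial>\<mu>)"
      by (subst nn_integral_density)
        (auto intro!: nn_integral_cong simp: sets_\<mu> ennreal_mult'[symmetric] mult_exp_exp algebra_simps)
    also have "\<dots> = ennreal (exp (\<theta> powr \<alpha> - (\<theta>' + t) powr \<alpha>)) * ennreal (exp (\<theta>' powr \<alpha> - \<theta> powr \<alpha>))"
      using assms that
      by (subst nn_integral_multc, measurable)
        (subst tilted_stable_law_exp_moment[OF law], auto simp: algebra_simps)
    also have "\<dots> = ennreal (exp (- ((\<theta>' + t) powr \<alpha> - \<theta>' powr \<alpha>)))"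
      by (simp flip: ennreal_mult' exp_add)
    finally show ?thesis .
  qed
  have sets_\<rho>: "sets ?\<rho> = sets borel" by (simp add: sets_\<mu>)
  have "emeasure ?\<rho> (space ?\<rho>) = 1"
    using laplace_nn[of 0] by (simp add: nn_integral_density emeasure_density sets_\<mu>)
  then have "prob_space ?\<rho>" by (rule prob_spaceI)
  moreover have "AE z in ?\<rho>. 0 < z"
    using pos by (subst AE_density) (auto simp: sets_\<mu> elim!: eventually_mono)
  moreover have "(\<integral>z. exp (- t * z) \<partial>?\<rho>) = exp (- ((\<theta>' + t) powr \<alpha> - \<theta>' powr \<alpha>))" if "0 \<le> t" for t
    using laplace_nn[OF that] by (subst integral_eq_nn_integral) (auto simp: sets_\<rho>)
  ultimately show ?thesis using sets_\<rho> by (simp add: tilted_stable_law_def)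
qed

definition frechet_law :: "real \<Rightarrow> real \<Rightarrow> real measure \<Rightarrow> bool" where
  "frechet_law \<tau> \<alpha>0 \<nu> \<longleftrightarrow> prob_space \<nu> \<and> sets \<nu> = sets borel \<and>
     (\<forall>x>0. measure \<nu> {..x} = exp (- ((x / \<tau>) powr (- 1 / \<alpha>0))))"

lemma frechet_law_AE_pos:
  assumes law: "frechet_law \<tau> \<alpha>0 \<nu>" and "0 < \<tau>" "0 < \<alpha>0"
  shows "AE x in \<nu>. 0 < x"
proof -
  interpret prob_space \<nu> using law by (simp add: frechet_law_def)
  have sets_\<nu>: "sets \<nu> = sets borel" using law by (simp add: frechet_law_def)
  have bound: "measure \<nu> {..0} \<le> exp (- L)" if "0 < L" for L
  proof -
    define x where "x = \<tau> * L powr (- \<alpha>0)"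
    have "0 < x" using that assms by (simp add: x_def)
    moreover have "(x / \<tau>) powr (- 1 / \<alpha>0) = L" using that assms by (simp add: x_def powr_powr)
    ultimately have "measure \<nu> {..x} = exp (- L)" using law by (simp add: frechet_law_def)
    moreover have "measure \<nu> {..0} \<le> measure \<nu> {..x}"
      using \<open>0 < x\<close> by (intro finite_measure_mono) (auto simp: sets_\<nu>)
    ultimately show ?thesis by simp
  qed
  have "measure \<nu> {..0} \<le> 0"
  proof (rule tendsto_le[OF trivial_limit_at_top_linorder _ tendsto_const])
    show "((\<lambda>L::real. exp (- L)) \<longlongrightarrow> 0) at_top"
      using filterlim_compose[OF exp_at_bot filterlim_uminus_at_bot_at_top] .
    show "\<forall>\<^sub>F L in at_top. measure \<nu> {..0} \<le> exp (- L)"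
      using eventually_gt_at_top[of 0] by eventually_elim (rule bound)
  qed
  then have "{..0} \<in> null_sets \<nu>"
    by (simp add: null_sets_def sets_\<nu> emeasure_eq_measure measure_le_0_iff)
  from AE_not_in[OF this] show ?thesis by (auto elim: eventually_mono)
qed

lemma frechet_powr_rescale:
  fixes x g \<tau> \<alpha>0 :: real
  assumes "0 < x" "0 < g" "0 < \<tau>" "0 < \<alpha>0"
  shows "((x / g powr \<alpha>0) / \<tau>) powr (- 1 / \<alpha>0) = (x / \<tau>) powr (- 1 / \<alpha>0) * g"
proof -
  have "(x / g powr \<alpha>0) / \<tau> = (x / \<tau>) / g powr \<alpha>0" by simp
  also have "\<dots> powr (- 1 / \<alpha>0) = (x / \<tau>) powr (- 1 / \<alpha>0) / (g powr \<alpha>0) powr (- 1 / \<alpha>0)"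
    using assms by (simp add: powr_divide powr_mult)
  also have "(g powr \<alpha>0) powr (- 1 / \<alpha>0) = 1 / g"
    using assms by (simp add: powr_powr powr_minus_divide)
  finally show ?thesis by simp
qed

section \<open>Independence\<close>

lemma (in prob_space) indep_vars_reindex:
  assumes h: "inj_on h I" and indep: "indep_vars M' X (h ` I)"
  shows "indep_vars (\<lambda>i. M' (h i)) (\<lambda>i. X (h i)) I"
  unfolding indep_vars_def2
proof
  show "\<forall>i\<in>I. random_variable (M' (h i)) (X (h i))"
    using indep by (auto simp: indep_vars_def2)
  have sets: "indep_sets (\<lambda>i. {X i -` A \<inter> space M |A. A \<in> sets (M' i)}) (h ` I)"
    using indep by (simp add: indep_vars_def2)
  show "indep_sets (\<lambda>i. {X (h i) -` A \<inter> space M |A. A \<in> sets (M' (h i))}) I"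
  proof (rule indep_setsI)
    show "{X (h i) -` A \<inter> space M |A. A \<in> sets (M' (h i))} \<subseteq> events" if "i \<in> I" for i
      using sets that by (auto simp: indep_sets_def)
    fix A J assume J: "J \<noteq> {}" "J \<subseteq> I" "finite J"
      and A: "\<forall>j\<in>J. A j \<in> {X (h j) -` A \<inter> space M |A. A \<in> sets (M' (h j))}"
    define A' where "A' = A \<circ> the_inv_into I h"
    have A'_h: "A' (h j) = A j" if "j \<in> J" for j
      using J that h by (auto simp: A'_def the_inv_into_f_f)
    have "prob (\<Inter>j\<in>h ` J. A' j) = (\<Prod>j\<in>h ` J. prob (A' j))"
      using J A by (intro indep_setsD[OF sets]) (auto simp: A'_h)
    moreover have "inj_on h J" using h J by (auto intro: inj_on_subset)
    ultimately show "prob (\<Inter>j\<in>J. A j) = (\<Prod>j\<in>J. prob (A j))"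
      by (simp add: prod.reindex A'_h cong: INF_cong)
  qed
qed

lemma (in prob_space)
  assumes "indep_vars M' (case_sum X Y) (A <+> B)"
  shows indep_vars_case_sum_Inl: "indep_vars (\<lambda>i. M' (Inl i)) X A"
    and indep_vars_case_sum_Inr: "indep_vars (\<lambda>i. M' (Inr i)) Y B"
proof -
  have "indep_vars (\<lambda>i. M' (Inl i)) (\<lambda>i. case_sum X Y (Inl i)) A"
    by (rule indep_vars_reindex) (auto intro: indep_vars_subset[OF assms])
  then show "indep_vars (\<lambda>i. M' (Inl i)) X A" by simp
  have "indep_vars (\<lambda>i. M' (Inr i)) (\<lambda>i. case_sum X Y (Inr i)) B"
    by (rule indep_vars_reindex) (auto intro: indep_vars_subset[OF assms])
  then show "indep_vars (\<lambda>i. M' (Inr i)) Y B" by simp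
qed

lemma (in prob_space) indep_var_case_sum:
  assumes "indep_vars (\<lambda>_. N) (case_sum X Y) (A <+> B)"
  shows "indep_var (PiM A (\<lambda>_. N)) (\<lambda>w. \<lambda>i\<in>A. X i w) (PiM B (\<lambda>_. N)) (\<lambda>w. \<lambda>j\<in>B. Y j w)"
proof -
  have "indep_var (PiM (Inl ` A) (\<lambda>_. N)) (\<lambda>w. \<lambda>i\<in>Inl ` A. case_sum X Y i w)
                  (PiM (Inr ` B) (\<lambda>_. N)) (\<lambda>w. \<lambda>i\<in>Inr ` B. case_sum X Y i w)"
    by (rule indep_var_restrict[OF assms]) auto
  then have "indep_var (PiM A (\<lambda>_. N)) ((\<lambda>v. \<lambda>i\<in>A. v (Inl i)) \<circ> (\<lambda>w. \<lambda>i\<in>Inl ` A. case_sum X Y i w))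
      (PiM B (\<lambda>_. N)) ((\<lambda>v. \<lambda>j\<in>B. v (Inr j)) \<circ> (\<lambda>w. \<lambda>i\<in>Inr ` B. case_sum X Y i w))"
    by (rule indep_var_compose) (auto intro!: measurable_restrict measurable_component_singleton)
  then show ?thesis by (simp add: o_def cong: restrict_cong)
qed

lemma (in prob_space) emeasure_indep_var_pair:
  assumes indep: "indep_var S X T Y" and C: "C \<in> sets (S \<Otimes>\<^sub>M T)"
  shows "emeasure M {w \<in> space M. (X w, Y w) \<in> C}
       = (\<integral>\<^sup>+w. emeasure (distr M T Y) (Pair (X w) -` C) \<partial>M)"
proof -
  from indep have [measurable]: "X \<in> measurable M S" "Y \<in> measurable M T"
    and joint: "distr M S X \<Otimes>\<^sub>M distr M T Y = distr M (S \<Otimes>\<^sub>M T) (\<lambda>w. (X w, Y w))"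
    by (auto simp: indep_var_distribution_eq)
  interpret DY: prob_space "distr M T Y" by (rule prob_space_distr) simp
  have "emeasure M {w \<in> space M. (X w, Y w) \<in> C} = emeasure (distr M (S \<Otimes>\<^sub>M T) (\<lambda>w. (X w, Y w))) C"
    using C by (simp add: emeasure_distr vimage_def Int_def conj_commute)
  also have "\<dots> = (\<integral>\<^sup>+v. emeasure (distr M T Y) (Pair v -` C) \<partial>distr M S X)"
    using C by (simp add: joint[symmetric] DY.emeasure_pair_measure_alt)
  also have "\<dots> = (\<integral>\<^sup>+w. emeasure (distr M T Y) (Pair (X w) -` C) \<partial>M)"
  proof -
    have "sets (S \<Otimes>\<^sub>M distr M T Y) = sets (S \<Otimes>\<^sub>M T)"
      by (rule sets_pair_measure_cong) simp_all
    then have "(\<lambda>v. emeasure (distr M T Y) (Pair v -` C)) \<in> borel_measurable S"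
      using C by (intro DY.measurable_emeasure_Pair) simp
    then show ?thesis by (simp add: nn_integral_distr)
  qed
  finally show ?thesis .
qed

lemma (in prob_space) emeasure_indep_vars_all_le:
  fixes E :: "'i \<Rightarrow> 'a \<Rightarrow> real"
  assumes indep: "indep_vars (\<lambda>_. borel) E B" and "finite B"
  shows "emeasure M {w \<in> space M. \<forall>j\<in>B. E j w \<le> c j} = (\<Prod>j\<in>B. emeasure M {w \<in> space M. E j w \<le> c j})"
proof (cases "B = {}")
  case False
  have "prob (\<Inter>j\<in>B. E j -` {..c j} \<inter> space M) = (\<Prod>j\<in>B. prob (E j -` {..c j} \<inter> space M))"
    using indep_varsD_finite[OF indep False \<open>finite B\<close>] by simp
  moreover have "(\<Inter>j\<in>B. E j -` {..c j} \<inter> space M) = {w \<in> space M. \<forall>j\<in>B. E j w \<le> c j}"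
    using False by auto
  moreover have "E j -` {..c j} \<inter> space M = {w \<in> space M. E j w \<le> c j}" for j
    by auto
  ultimately show ?thesis by (simp add: emeasure_eq_measure prod_ennreal)
qed (simp add: emeasure_space_1)

lemma (in prob_space) emeasure_indep_all_le:
  fixes Z E :: "'i \<Rightarrow> 'a \<Rightarrow> real" and h :: "'i \<Rightarrow> ('i \<Rightarrow> real) \<Rightarrow> real"
  assumes indep: "indep_vars (\<lambda>_. borel) (case_sum Z E) (A <+> B)" and B: "finite B"
    and h: "\<And>j. j \<in> B \<Longrightarrow> h j \<in> borel_measurable (PiM A (\<lambda>_. borel))"
  shows "emeasure M {w \<in> space M. \<forall>j\<in>B. E j w \<le> h j (\<lambda>k\<in>A. Z k w)}
       = (\<integral>\<^sup>+w. (\<Prod>j\<in>B. emeasure M {v \<in> space M. E j v \<le> h j (\<lambda>k\<in>A. Z k w)}) \<partial>M)"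
proof -
  define PA where "PA = PiM A (\<lambda>_. borel :: real measure)"
  define PB where "PB = PiM B (\<lambda>_. borel :: real measure)"
  define X where "X w = (\<lambda>k\<in>A. Z k w)" for w
  define Y where "Y w = (\<lambda>j\<in>B. E j w)" for w
  have XY: "indep_var PA X PB Y"
    unfolding PA_def PB_def X_def Y_def by (rule indep_var_case_sum[OF indep])
  then have Y_measurable: "Y \<in> measurable M PB"
    by (simp add: indep_var_distribution_eq)
  have XY_space: "X w \<in> space PA" "Y w \<in> space PB" if "w \<in> space M" for w
    using XY that by (auto simp: indep_var_distribution_eq intro: measurable_space)
  define C where "C = {p \<in> space (PA \<Otimes>\<^sub>M PB). \<forall>j\<in>B. snd p j \<le> h j (fst p)}"
  have "Measurable.pred (PA \<Otimes>\<^sub>M PB) (\<lambda>p. \<forall>j\<in>B. snd p j \<le> h j (fst p))"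
  proof (rule pred_intros_finite[OF B])
    fix j assume j: "j \<in> B"
    have [measurable]: "(\<lambda>e. e j) \<in> borel_measurable PB"
      unfolding PB_def using j by (rule measurable_component_singleton)
    have [measurable]: "h j \<in> borel_measurable PA" unfolding PA_def using j by (rule h)
    show "Measurable.pred (PA \<Otimes>\<^sub>M PB) (\<lambda>p. snd p j \<le> h j (fst p))" by measurable
  qed
  then have C: "C \<in> sets (PA \<Otimes>\<^sub>M PB)" by (simp add: C_def pred_def)
  have section_measure: "emeasure (distr M PB Y) (Pair v -` C)
      = (\<Prod>j\<in>B. emeasure M {w \<in> space M. E j w \<le> h j v})" if v: "v \<in> space PA" for v
  proof -
    have "Pair v -` C = PiE B (\<lambda>j. {..h j v})"
      using v by (auto simp: C_def space_pair_measure PB_def space_PiM PiE_def Pi_def)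
    moreover have "PiE B (\<lambda>j. {..h j v}) \<in> sets PB"
      unfolding PB_def using B by (intro sets_PiM_I_finite) auto
    then have "emeasure (distr M PB Y) (PiE B (\<lambda>j. {..h j v})) = emeasure M (Y -` PiE B (\<lambda>j. {..h j v}) \<inter> space M)"
      by (rule emeasure_distr[OF Y_measurable])
    moreover have "Y -` PiE B (\<lambda>j. {..h j v}) \<inter> space M = {w \<in> space M. \<forall>j\<in>B. E j w \<le> h j v}"
      by (auto simp: Y_def PiE_def Pi_def)
    ultimately show ?thesis
      using emeasure_indep_vars_all_le[OF indep_vars_case_sum_Inr[OF indep] B] by simp
  qed
  have "{w \<in> space M. \<forall>j\<in>B. E j w \<le> h j (X w)} = {w \<in> space M. (X w, Y w) \<in> C}"
    using XY_space by (auto simp: C_def space_pair_measure Y_def)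
  then have "emeasure M {w \<in> space M. \<forall>j\<in>B. E j w \<le> h j (X w)}
      = (\<integral>\<^sup>+w. emeasure (distr M PB Y) (Pair (X w) -` C) \<partial>M)"
    using emeasure_indep_var_pair[OF XY C] by simp
  also have "\<dots> = (\<integral>\<^sup>+w. (\<Prod>j\<in>B. emeasure M {v \<in> space M. E j v \<le> h j (X w)}) \<partial>M)"
    by (intro nn_integral_cong section_measure XY_space)
  finally show ?thesis by (simp add: X_def)
qed

lemma
  fixes L :: "'i \<Rightarrow> 'b measure"
  assumes L_prob: "\<And>i. i \<in> J \<Longrightarrow> prob_space (L i)" and sets_L: "\<And>i. i \<in> J \<Longrightarrow> sets (L i) = sets N"
  shows measurable_PiM_component: "i \<in> J \<Longrightarrow> (\<lambda>x. x i) \<in> measurable (PiM J L) N"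
    and distr_PiM_component_eq: "i \<in> J \<Longrightarrow> distr (PiM J L) N (\<lambda>x. x i) = L i"
    and indep_vars_PiM_components: "inj_on h I \<Longrightarrow> h \<in> I \<rightarrow> J \<Longrightarrow>
           prob_space.indep_vars (PiM J L) (\<lambda>_. N) (\<lambda>i x. x (h i)) I"
proof -
  interpret prob_space "PiM J L" by (rule prob_space_PiM) (rule L_prob)
  show measurable: "(\<lambda>x. x i) \<in> measurable (PiM J L) N" if "i \<in> J" for i
    using measurable_component_singleton[OF that, of L] sets_L[OF that] by (simp cong: measurable_cong_sets)
  show distr: "distr (PiM J L) N (\<lambda>x. x i) = L i" if "i \<in> J" for i
  proof -
    have "distr (PiM J L) N (\<lambda>x. x i) = distr (PiM J L) (L i) (\<lambda>x. x i)"
      by (rule distr_cong) (use sets_L[OF that] in auto)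
    also have "\<dots> = L i" by (rule distr_PiM_component[OF L_prob that])
    finally show ?thesis .
  qed
  assume h: "inj_on h I" "h \<in> I \<rightarrow> J"
  then have hJ: "h i \<in> J" if "i \<in> I" for i using that by auto
  show "indep_vars (\<lambda>_. N) (\<lambda>i x. x (h i)) I"
  proof (cases "I = {}")
    case False
    show ?thesis
    proof (subst indep_vars_iff_distr_eq_PiM'[OF False])
      show "random_variable N (\<lambda>x. x (h i))" if "i \<in> I" for i
        using measurable hJ that by auto
      have "distr (PiM J L) (PiM I (\<lambda>_. N)) (\<lambda>x. \<lambda>i\<in>I. x (h i))
          = distr (PiM J L) (PiM I (\<lambda>i. L (h i))) (\<lambda>x. \<lambda>i\<in>I. x (h i))"
        by (intro distr_cong sets_PiM_cong) (auto simp: sets_L hJ)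
      also have "\<dots> = PiM I (\<lambda>i. L (h i))" by (rule distr_PiM_reindex[OF L_prob h])
      also have "\<dots> = PiM I (\<lambda>i. distr (PiM J L) N (\<lambda>x. x (h i)))"
        by (intro PiM_cong) (auto simp: distr hJ)
      finally show "distr (PiM J L) (PiM I (\<lambda>_. N)) (\<lambda>x. \<lambda>i\<in>I. x (h i))
          = PiM I (\<lambda>i. distr (PiM J L) N (\<lambda>x. x (h i)))" .
    qed
  qed (simp add: indep_vars_def indep_sets_def)
qed

section \<open>The model\<close>

lemma
  assumes "model M \<alpha> \<alpha>0 \<tau> K \<theta> ns \<omega> Z eps"
  shows model_tilted_stable_law: "k < K \<Longrightarrow> tilted_stable_law \<alpha> (\<theta> k) (distr M borel (Z k))"
    and model_frechet_law: "j < ns \<Longrightarrow> frechet_law \<tau> \<alpha>0 (distr M borel (eps j))"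
proof -
  interpret prob_space M using assms by (simp add: model_def)
  show "tilted_stable_law \<alpha> (\<theta> k) (distr M borel (Z k))" if "k < K"
  proof -
    have [measurable]: "Z k \<in> borel_measurable M" using assms that by (simp add: model_def)
    show ?thesis
      using assms that
      by (auto simp: tilted_stable_law_def model_def prob_space_distr AE_distr_iff integral_distr)
  qed
  show "frechet_law \<tau> \<alpha>0 (distr M borel (eps j))" if "j < ns"
  proof -
    have [measurable]: "eps j \<in> borel_measurable M" using assms that by (simp add: model_def)
    have "measure (distr M borel (eps j)) {..x} = measure M {w \<in> space M. eps j w \<le> x}" for x
      by (subst measure_distr) (auto intro!: arg_cong[where f = "measure M"])
    then show ?thesis
      using assms that by (auto simp: frechet_law_def model_def prob_space_distr)
  qed
qed

lemma model_PiM_of_laws: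
  fixes \<mu> \<nu> :: "nat \<Rightarrow> real measure"
  assumes \<mu>: "\<And>k. k < K \<Longrightarrow> tilted_stable_law \<alpha> (\<theta> k) (\<mu> k)"
    and \<nu>: "\<And>j. j < ns \<Longrightarrow> frechet_law \<tau> \<alpha>0 (\<nu> j)"
  shows "model (PiM {..<K + ns} (\<lambda>i. if i < K then \<mu> i else \<nu> (i - K))) \<alpha> \<alpha>0 \<tau> K \<theta> ns \<omega>
           (\<lambda>k x. x k) (\<lambda>j x. x (K + j))"
    (is "model ?N _ _ _ _ _ _ _ _ _")
proof -
  define L where "L i = (if i < K then \<mu> i else \<nu> (i - K))" for i
  have L_prob: "prob_space (L i)" and sets_L: "sets (L i) = sets borel" if "i < K + ns" for i
    using that \<mu> \<nu> by (auto simp: L_def tilted_stable_law_def frechet_law_def)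
  have N: "?N = PiM {..<K + ns} L" by (simp add: L_def[abs_def])
  interpret prob_space ?N unfolding N by (rule prob_space_PiM) (simp add: L_prob)
  note coordinates = measurable_PiM_component distr_PiM_component_eq indep_vars_PiM_components
  note coordinates = coordinates[of "{..<K + ns}" L borel, OF L_prob sets_L, simplified, folded N]
  define h where "h i = (case i of Inl k \<Rightarrow> k | Inr j \<Rightarrow> K + j)" for i
  have "inj_on h ({..<K} <+> {..<ns})" "h \<in> ({..<K} <+> {..<ns}) \<rightarrow> {..<K + ns}"
    by (auto simp: inj_on_def h_def split: sum.splits)
  from coordinates(3)[OF this]
  have "indep_vars (\<lambda>_. borel) (case_sum (\<lambda>k x. x k) (\<lambda>j x. x (K + j))) ({..<K} <+> {..<ns})"
    by (rule indep_vars_cong[THEN iffD1, rotated -1]) (auto simp: h_def split: sum.split)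
  moreover have "AE x in ?N. 0 < x k" if "k < K" for k
  proof -
    have "k \<in> {..<K + ns}" "AE z in L k. 0 < z"
      using \<mu>[OF that] that unfolding L_def by (auto simp: tilted_stable_law_def)
    from AE_PiM_component[where M = L and P = "\<lambda>z. 0 < z", OF _ this] show ?thesis
      unfolding N by (simp add: L_prob)
  qed
  moreover have "(\<integral>x. exp (- t * x k) \<partial>?N) = exp (- ((\<theta> k + t) powr \<alpha> - \<theta> k powr \<alpha>))"
    if "k < K" "0 \<le> t" for k t
    using integral_distr[OF coordinates(1), of k "\<lambda>z. exp (- t * z)"] coordinates(2)[of k] \<mu>[OF that(1)] that
    by (simp add: L_def tilted_stable_law_def)
  moreover have "measure ?N {x \<in> space ?N. x (K + j) \<le> y} = exp (- ((y / \<tau>) powr (- 1 / \<alpha>0)))"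
    if "j < ns" "0 < y" for j y
  proof -
    have "measure ?N {x \<in> space ?N. x (K + j) \<le> y} = measure (distr ?N borel (\<lambda>x. x (K + j))) {..y}"
      using coordinates(1)[of "K + j"] that
      by (subst measure_distr) (auto intro!: arg_cong[where f = "measure ?N"])
    then show ?thesis using coordinates(2)[of "K + j"] \<nu>[OF that(1)] that by (simp add: L_def frechet_law_def)
  qed
  ultimately show ?thesis
    using coordinates(1) by (auto simp: model_def prob_space_axioms)
qed

lemma model_exists_retilted:
  assumes model: "model M \<alpha> \<alpha>0 \<tau> K \<theta> ns \<omega> Z eps"
    and "\<And>k. k < K \<Longrightarrow> 0 \<le> \<theta>' k"
    and "\<And>k. k < K \<Longrightarrow> 0 < \<theta> k \<Longrightarrow> 0 < \<theta>' k"
  shows "\<exists>(N :: (nat \<Rightarrow> real) measure) Z' eps'. model N \<alpha> \<alpha>0 \<tau> K \<theta>' ns \<omega>' Z' eps'"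
proof -
  define \<mu> where "\<mu> k = density (distr M borel (Z k))
     (\<lambda>z. ennreal (exp ((\<theta> k - \<theta>' k) * z - (\<theta> k powr \<alpha> - \<theta>' k powr \<alpha>))))" for k
  have "tilted_stable_law \<alpha> (\<theta>' k) (\<mu> k)" if "k < K" for k
    unfolding \<mu>_def using assms that
    by (intro tilted_stable_law_retilt model_tilted_stable_law[OF model]) auto
  from model_PiM_of_laws[where \<mu> = \<mu> and \<nu> = "\<lambda>j. distr M borel (eps j)", OF this
      model_frechet_law[OF model]]
  show ?thesis by blast
qed

lemma model_Xvar_measurable:
  assumes "model M \<alpha> \<alpha>0 \<tau> K \<theta> ns \<omega> Z eps" "j < ns"
  shows "Xvar \<alpha> \<alpha>0 K \<omega> Z eps j \<in> borel_measurable M"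
  using assms unfolding Xvar_def model_def
  by (intro borel_measurable_times powr_real_measurable borel_measurable_sum measurable_const) auto

lemma is_joint_cdf_model_Xvar:
  fixes N :: "(nat \<Rightarrow> real) measure"
  assumes "model N \<alpha> \<alpha>0 \<tau> K \<theta> ns \<omega> Z eps"
  shows "is_joint_cdf ns (joint_cdf N (Xvar \<alpha> \<alpha>0 K \<omega> Z eps) ns)"
  unfolding is_joint_cdf_def using assms model_Xvar_measurable[OF assms]
  by (intro exI[of _ N] exI[of _ "Xvar \<alpha> \<alpha>0 K \<omega> Z eps"]) (auto simp: model_def)

lemma model_laplace_nn:
  assumes model: "model M \<alpha> \<alpha>0 \<tau> K \<theta> ns \<omega> Z eps" and "k < K" "0 \<le> t"
  shows "(\<integral>\<^sup>+w. ennreal (exp (- t * Z k w)) \<partial>M) = ennreal (exp (- ((\<theta> k + t) powr \<alpha> - \<theta> k powr \<alpha>)))"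
proof -
  have "Z k \<in> borel_measurable M" using model assms(2) by (simp add: model_def)
  then have "(\<integral>\<^sup>+w. ennreal (exp (- t * Z k w)) \<partial>M) = (\<integral>\<^sup>+z. ennreal (exp (- t * z)) \<partial>distr M borel (Z k))"
    by (simp add: nn_integral_distr)
  also have "\<dots> = ennreal (exp (\<theta> k powr \<alpha> - (\<theta> k + t) powr \<alpha>))"
    by (rule tilted_stable_law_nn_laplace[OF model_tilted_stable_law[OF model assms(2)] assms(3)])
  finally show ?thesis by simp
qed

lemma model_prod_frechet_cdf:
  assumes model: "model M \<alpha> \<alpha>0 \<tau> K \<theta> ns \<omega> Z eps" and "0 < \<tau>" "0 < \<alpha>0"
    and x: "\<And>j. j < ns \<Longrightarrow> 0 < x j" and g: "\<And>j. j < ns \<Longrightarrow> 0 < g j"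
  shows "(\<Prod>j<ns. emeasure M {w \<in> space M. eps j w \<le> x j / g j powr \<alpha>0})
       = ennreal (exp (- (\<Sum>j<ns. (x j / \<tau>) powr (- 1 / \<alpha>0) * g j)))"
proof -
  interpret prob_space M using model by (simp add: model_def)
  have "(\<Prod>j<ns. emeasure M {w \<in> space M. eps j w \<le> x j / g j powr \<alpha>0})
      = (\<Prod>j<ns. ennreal (exp (- ((x j / \<tau>) powr (- 1 / \<alpha>0) * g j))))"
  proof (rule prod.cong[OF refl])
    fix j assume "j \<in> {..<ns}"
    then have j: "j < ns" by simp
    have "0 < x j / g j powr \<alpha>0" using x[OF j] g[OF j] by simp
    then have "measure M {w \<in> space M. eps j w \<le> x j / g j powr \<alpha>0}
        = exp (- (((x j / g j powr \<alpha>0) / \<tau>) powr (- 1 / \<alpha>0)))"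
      using model j unfolding model_def by blast
    then show "emeasure M {w \<in> space M. eps j w \<le> x j / g j powr \<alpha>0}
        = ennreal (exp (- ((x j / \<tau>) powr (- 1 / \<alpha>0) * g j)))"
      using frechet_powr_rescale[OF x[OF j] g[OF j] assms(2,3)] by (simp add: emeasure_eq_measure)
  qed
  also have "\<dots> = ennreal (exp (- (\<Sum>j<ns. (x j / \<tau>) powr (- 1 / \<alpha>0) * g j)))"
    by (simp add: prod_ennreal exp_sum flip: sum_negf)
  finally show ?thesis .
qed

lemma sum_powr_mult_pos:
  fixes \<omega> z :: "nat \<Rightarrow> real"
  assumes "\<forall>k<K. 0 \<le> \<omega> k" "\<exists>k<K. \<omega> k \<noteq> 0" "\<forall>k<K. 0 < z k"
  shows "0 < (\<Sum>k<K. \<omega> k powr p * z k)"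
proof -
  obtain k where k: "k < K" "\<omega> k \<noteq> 0" using assms(2) by blast
  then have "0 < \<omega> k powr p * z k" using assms(3) by simp
  then show ?thesis using assms(3) k by (intro sum_pos2[where i = k]) (auto simp: less_imp_le)
qed

lemma model_AE_pos:
  assumes model: "model M \<alpha> \<alpha>0 \<tau> K \<theta> ns \<omega> Z eps" and "0 < \<alpha>0" "0 < \<tau>"
  shows "AE w in M. (\<forall>k<K. 0 < Z k w) \<and> (\<forall>j<ns. 0 < eps j w)"
proof -
  interpret prob_space M using model by (simp add: model_def)
  have "AE w in M. \<forall>k\<in>{..<K}. 0 < Z k w"
    by (rule AE_finite_allI) (use model in \<open>auto simp: model_def\<close>)
  moreover have "AE w in M. \<forall>j\<in>{..<ns}. 0 < eps j w"
  proof (rule AE_finite_allI)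
    fix j assume "j \<in> {..<ns}"
    then have j: "j < ns" by simp
    have "AE z in distr M borel (eps j). 0 < z"
      using frechet_law_AE_pos[OF model_frechet_law[OF model j]] assms(2,3) by simp
    moreover have "eps j \<in> borel_measurable M" using model j by (simp add: model_def)
    ultimately show "AE w in M. 0 < eps j w" by (simp add: AE_distr_iff)
  qed simp
  ultimately show ?thesis by eventually_elim auto
qed

lemma model_nn_integral_exp_sum:
  assumes model: "model M \<alpha> \<alpha>0 \<tau> K \<theta> ns \<omega> Z eps" and t: "\<And>k. k < K \<Longrightarrow> 0 \<le> t k"
  shows "(\<integral>\<^sup>+w. ennreal (exp (- (\<Sum>k<K. t k * Z k w))) \<partial>M)
       = ennreal (exp (- (\<Sum>k<K. (\<theta> k + t k) powr \<alpha> - \<theta> k powr \<alpha>)))"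
proof -
  interpret prob_space M using model by (simp add: model_def)
  have [measurable]: "Z k \<in> borel_measurable M" if "k < K" for k
    using model that by (simp add: model_def)
  have "indep_vars (\<lambda>_. borel) Z {..<K}"
    using indep_vars_case_sum_Inl[of "\<lambda>_. borel" Z eps "{..<K}" "{..<ns}"] model
    by (simp add: model_def)
  then have "indep_vars (\<lambda>_. borel) (\<lambda>k w. ennreal (exp (- t k * Z k w))) {..<K}"
    by (rule indep_vars_compose2) measurable
  then have "(\<integral>\<^sup>+w. (\<Prod>k<K. ennreal (exp (- t k * Z k w))) \<partial>M)
      = (\<Prod>k<K. \<integral>\<^sup>+w. ennreal (exp (- t k * Z k w)) \<partial>M)"
    by (intro indep_vars_nn_integral) auto
  also have "\<dots> = (\<Prod>k<K. ennreal (exp (- ((\<theta> k + t k) powr \<alpha> - \<theta> k powr \<alpha>))))"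
    using t by (intro prod.cong refl model_laplace_nn[OF model]) auto
  finally show ?thesis by (simp add: prod_ennreal exp_sum flip: sum_negf)
qed

lemma model_emeasure_Xvar_le:
  assumes model: "model M \<alpha> \<alpha>0 \<tau> K \<theta> ns \<omega> Z eps" and "0 < \<alpha>0" "0 < \<tau>"
    and \<omega>: "\<forall>k<K. \<forall>j<ns. 0 \<le> \<omega> k j" "\<forall>j<ns. \<exists>k<K. \<omega> k j \<noteq> 0"
  shows "emeasure M {w \<in> space M. \<forall>j\<in>{..<ns}. Xvar \<alpha> \<alpha>0 K \<omega> Z eps j w \<le> x j}
       = emeasure M {w \<in> space M. \<forall>j\<in>{..<ns}.
                       eps j w \<le> x j / (\<Sum>k<K. \<omega> k j powr (1 / \<alpha>) * Z k w) powr \<alpha>0}"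
proof (rule emeasure_eq_AE)
  show "AE w in M. w \<in> {w \<in> space M. \<forall>j\<in>{..<ns}. Xvar \<alpha> \<alpha>0 K \<omega> Z eps j w \<le> x j} \<longleftrightarrow>
      w \<in> {w \<in> space M. \<forall>j\<in>{..<ns}. eps j w \<le> x j / (\<Sum>k<K. \<omega> k j powr (1 / \<alpha>) * Z k w) powr \<alpha>0}"
    using model_AE_pos[OF model assms(2,3)]
  proof eventually_elim
    case (elim w)
    have "eps j w * (\<Sum>k<K. \<omega> k j powr (1 / \<alpha>) * Z k w) powr \<alpha>0 \<le> x j
        \<longleftrightarrow> eps j w \<le> x j / (\<Sum>k<K. \<omega> k j powr (1 / \<alpha>) * Z k w) powr \<alpha>0" if "j < ns" for j
    proof -
      have "0 < (\<Sum>k<K. \<omega> k j powr (1 / \<alpha>) * Z k w)"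
        using elim \<omega> that by (intro sum_powr_mult_pos) auto
      then show ?thesis by (simp add: pos_le_divide_eq)
    qed
    then show ?case by (auto simp: Xvar_def)
  qed
  have [measurable]: "Z k \<in> borel_measurable M" if "k < K" for k
    using model that by (simp add: model_def)
  have "eps j \<in> borel_measurable M" if "j < ns" for j
    using model that by (simp add: model_def)
  then show "{w \<in> space M. \<forall>j\<in>{..<ns}. eps j w \<le> x j / (\<Sum>k<K. \<omega> k j powr (1 / \<alpha>) * Z k w) powr \<alpha>0}
      \<in> sets M"
    by (intro sets.sets_Collect_finite_All borel_measurable_le) auto
  show "{w \<in> space M. \<forall>j\<in>{..<ns}. Xvar \<alpha> \<alpha>0 K \<omega> Z eps j w \<le> x j} \<in> sets M"
    by (intro sets.sets_Collect_finite_All borel_measurable_le model_Xvar_measurable[OF model]) auto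
qed

lemma model_emeasure_Xvar_le_nn_integral:
  assumes model: "model M \<alpha> \<alpha>0 \<tau> K \<theta> ns \<omega> Z eps" and "0 < \<alpha>0" "0 < \<tau>"
    and \<omega>: "\<forall>k<K. \<forall>j<ns. 0 \<le> \<omega> k j" "\<forall>j<ns. \<exists>k<K. \<omega> k j \<noteq> 0" and x: "\<forall>j<ns. 0 < x j"
  shows "emeasure M {w \<in> space M. \<forall>j\<in>{..<ns}. Xvar \<alpha> \<alpha>0 K \<omega> Z eps j w \<le> x j}
       = (\<integral>\<^sup>+w. ennreal (exp (- (\<Sum>k<K. (\<Sum>j<ns. \<omega> k j powr (1 / \<alpha>) * (x j / \<tau>) powr (- 1 / \<alpha>0))
                                             * Z k w))) \<partial>M)"
proof -
  interpret prob_space M using model by (simp add: model_def)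
  define h where "h j v = x j / (\<Sum>k<K. \<omega> k j powr (1 / \<alpha>) * v k) powr \<alpha>0" for j v
  have h_measurable: "h j \<in> borel_measurable (PiM {..<K} (\<lambda>_. borel))" for j
  proof -
    have "(\<lambda>v. \<Sum>k<K. \<omega> k j powr (1 / \<alpha>) * v k) \<in> borel_measurable (PiM {..<K} (\<lambda>_. borel))"
      by (intro borel_measurable_sum borel_measurable_times measurable_const
          measurable_component_singleton) auto
    then show ?thesis unfolding h_def by measurable
  qed
  have "emeasure M {w \<in> space M. \<forall>j\<in>{..<ns}. Xvar \<alpha> \<alpha>0 K \<omega> Z eps j w \<le> x j}
      = emeasure M {w \<in> space M. \<forall>j\<in>{..<ns}. eps j w \<le> h j (\<lambda>k\<in>{..<K}. Z k w)}"
    using model_emeasure_Xvar_le[OF model assms(2,3) \<omega>] by (simp add: h_def)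
  also have "\<dots> = (\<integral>\<^sup>+w. (\<Prod>j\<in>{..<ns}. emeasure M {v \<in> space M. eps j v \<le> h j (\<lambda>k\<in>{..<K}. Z k w)}) \<partial>M)"
    using model h_measurable by (intro emeasure_indep_all_le) (simp_all add: model_def)
  also have "\<dots> = (\<integral>\<^sup>+w. ennreal (exp (- (\<Sum>k<K. (\<Sum>j<ns. \<omega> k j powr (1 / \<alpha>) * (x j / \<tau>) powr (- 1 / \<alpha>0))
                                             * Z k w))) \<partial>M)"
  proof (rule nn_integral_cong_AE)
    show "AE w in M. (\<Prod>j\<in>{..<ns}. emeasure M {v \<in> space M. eps j v \<le> h j (\<lambda>k\<in>{..<K}. Z k w)})
        = ennreal (exp (- (\<Sum>k<K. (\<Sum>j<ns. \<omega> k j powr (1 / \<alpha>) * (x j / \<tau>) powr (- 1 / \<alpha>0)) * Z k w)))"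
      using model_AE_pos[OF model assms(2,3)]
    proof eventually_elim
      case (elim w)
      define S where "S j = (\<Sum>k<K. \<omega> k j powr (1 / \<alpha>) * Z k w)" for j
      have "(\<Prod>j<ns. emeasure M {v \<in> space M. eps j v \<le> x j / S j powr \<alpha>0})
          = ennreal (exp (- (\<Sum>j<ns. (x j / \<tau>) powr (- 1 / \<alpha>0) * S j)))"
        using x \<omega> elim unfolding S_def
        by (intro model_prod_frechet_cdf[OF model assms(3,2)] sum_powr_mult_pos) auto
      also have "(\<Sum>j<ns. (x j / \<tau>) powr (- 1 / \<alpha>0) * S j)
          = (\<Sum>k<K. (\<Sum>j<ns. \<omega> k j powr (1 / \<alpha>) * (x j / \<tau>) powr (- 1 / \<alpha>0)) * Z k w)"
        unfolding S_def by (simp add: sum_distrib_left sum_distrib_right mult_ac) (rule sum.swap)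
      finally show ?case by (simp add: h_def S_def)
    qed
  qed
  finally show ?thesis .
qed

lemma model_joint_cdf:
  assumes model: "model M \<alpha> \<alpha>0 \<tau> K \<theta> ns \<omega> Z eps" and "0 < \<alpha>0" "0 < \<tau>"
    and \<omega>: "\<forall>k<K. \<forall>j<ns. 0 \<le> \<omega> k j" "\<forall>j<ns. \<exists>k<K. \<omega> k j \<noteq> 0"
  shows "joint_cdf M (Xvar \<alpha> \<alpha>0 K \<omega> Z eps) ns x =
     (if \<forall>j<ns. 0 < x j then
        exp (- (\<Sum>k<K. (\<theta> k + (\<Sum>j<ns. \<omega> k j powr (1 / \<alpha>) * (x j / \<tau>) powr (- 1 / \<alpha>0))) powr \<alpha>
                        - \<theta> k powr \<alpha>))
      else 0)"
proof -
  interpret prob_space M using model by (simp add: model_def)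
  have set_eq: "{w \<in> space M. \<forall>j<ns. Xvar \<alpha> \<alpha>0 K \<omega> Z eps j w \<le> x j}
      = {w \<in> space M. \<forall>j\<in>{..<ns}. Xvar \<alpha> \<alpha>0 K \<omega> Z eps j w \<le> x j}"
    by auto
  show ?thesis
  proof (cases "\<forall>j<ns. 0 < x j")
    case False
    then obtain j where j: "j < ns" "x j \<le> 0" by (auto simp: not_less)
    have "prob {w \<in> space M. \<forall>j<ns. Xvar \<alpha> \<alpha>0 K \<omega> Z eps j w \<le> x j} = 0"
    proof (rule prob_eq_0_AE)
      show "AE w in M. \<not> (\<forall>j<ns. Xvar \<alpha> \<alpha>0 K \<omega> Z eps j w \<le> x j)"
        using model_AE_pos[OF model assms(2,3)]
      proof eventually_elim
        case (elim w)
        then have "0 < (\<Sum>k<K. \<omega> k j powr (1 / \<alpha>) * Z k w)"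
          using \<omega> j by (intro sum_powr_mult_pos) auto
        then have "0 < Xvar \<alpha> \<alpha>0 K \<omega> Z eps j w" using elim j by (simp add: Xvar_def)
        then show ?case using j by (auto simp: not_le)
      qed
    qed
    then show ?thesis using False by (simp add: joint_cdf_def)
  next
    case True
    have "ennreal (prob {w \<in> space M. \<forall>j\<in>{..<ns}. Xvar \<alpha> \<alpha>0 K \<omega> Z eps j w \<le> x j})
        = ennreal (exp (- (\<Sum>k<K. (\<theta> k + (\<Sum>j<ns. \<omega> k j powr (1 / \<alpha>) * (x j / \<tau>) powr (- 1 / \<alpha>0)))
                              powr \<alpha> - \<theta> k powr \<alpha>)))"
      using model_emeasure_Xvar_le_nn_integral[OF model assms(2,3) \<omega> True]
        model_nn_integral_exp_sum[OF model] by (simp add: emeasure_eq_measure sum_nonneg)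
    then show ?thesis using True set_eq by (simp add: joint_cdf_def)
  qed
qed

lemma tilted_exponent_rescale:
  fixes \<theta> T c s \<alpha> :: real
  assumes "0 \<le> \<theta>" "0 \<le> T" "0 < c" "c powr \<alpha> = s"
  shows "(\<theta> / c + T / c) powr \<alpha> - (\<theta> / c) powr \<alpha> = ((\<theta> + T) powr \<alpha> - \<theta> powr \<alpha>) / s"
  using assms by (simp add: powr_divide diff_divide_distrib flip: add_divide_distrib)

lemma model_joint_cdf_rescaled:
  assumes "0 < \<alpha>" "0 < \<alpha>0" "0 < \<tau>" "0 < s"
    and \<theta>: "\<forall>k<K. 0 \<le> \<theta> k"
    and \<omega>: "\<forall>k<K. \<forall>j<ns. 0 \<le> \<omega> k j" "\<forall>j<ns. \<exists>k<K. \<omega> k j \<noteq> 0"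
    and M: "model M \<alpha> \<alpha>0 \<tau> K \<theta> ns \<omega> Z eps"
    and N: "model N \<alpha> \<alpha>0 \<tau> K (\<lambda>k. \<theta> k / s powr (1 / \<alpha>)) ns (\<lambda>k j. \<omega> k j / s) Z' eps'"
  shows "joint_cdf N (Xvar \<alpha> \<alpha>0 K (\<lambda>k j. \<omega> k j / s) Z' eps') ns x
       = joint_cdf M (Xvar \<alpha> \<alpha>0 K \<omega> Z eps) ns x powr (1 / s)"
proof -
  define c where "c = s powr (1 / \<alpha>)"
  have c: "0 < c" "c powr \<alpha> = s" using assms(1,4) by (simp_all add: c_def powr_powr)
  have cdf_N: "joint_cdf N (Xvar \<alpha> \<alpha>0 K (\<lambda>k j. \<omega> k j / s) Z' eps') ns x =
     (if \<forall>j<ns. 0 < x j then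
        exp (- (\<Sum>k<K. (\<theta> k / c + (\<Sum>j<ns. (\<omega> k j / s) powr (1 / \<alpha>) * (x j / \<tau>) powr (- 1 / \<alpha>0)))
                          powr \<alpha> - (\<theta> k / c) powr \<alpha>))
      else 0)"
    using model_joint_cdf[OF N assms(2,3)] \<omega> assms(4) by (simp add: c_def)
  show ?thesis
  proof (cases "\<forall>j<ns. 0 < x j")
    case False
    then have not_pos: "(\<forall>j<ns. 0 < x j) = False" by blast
    show ?thesis
      using cdf_N model_joint_cdf[OF M assms(2,3) \<omega>, of x] assms(4)
      by (simp only: not_pos if_False) simp
  next
    case True
    define T where "T k = (\<Sum>j<ns. \<omega> k j powr (1 / \<alpha>) * (x j / \<tau>) powr (- 1 / \<alpha>0))" for k
    have "(\<Sum>j<ns. (\<omega> k j / s) powr (1 / \<alpha>) * (x j / \<tau>) powr (- 1 / \<alpha>0)) = T k / c" if "k < K" for k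
      using \<omega>(1) that assms(4)
      by (simp add: T_def c_def powr_divide sum_divide_distrib mult_ac)
    then have "joint_cdf N (Xvar \<alpha> \<alpha>0 K (\<lambda>k j. \<omega> k j / s) Z' eps') ns x
        = exp (- (\<Sum>k<K. ((\<theta> k + T k) powr \<alpha> - \<theta> k powr \<alpha>) / s))"
      using cdf_N True \<theta> c by (simp add: tilted_exponent_rescale T_def sum_nonneg)
    also have "\<dots> = exp (- (\<Sum>k<K. (\<theta> k + T k) powr \<alpha> - \<theta> k powr \<alpha>)) powr (1 / s)"
      by (simp add: powr_def sum_divide_distrib)
    also have "\<dots> = joint_cdf M (Xvar \<alpha> \<alpha>0 K \<omega> Z eps) ns x powr (1 / s)"
      using model_joint_cdf[OF M assms(2,3) \<omega>] True by (simp add: T_def)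
    finally show ?thesis .
  qed
qed

theorem mainTheorem5:
  fixes M :: "'a measure" and Z eps :: "nat \<Rightarrow> 'a \<Rightarrow> real"
    and \<alpha> \<alpha>0 \<tau> :: real and K ns :: nat
    and \<theta> :: "nat \<Rightarrow> real" and \<omega> :: "nat \<Rightarrow> nat \<Rightarrow> real"
  assumes "0 < \<alpha>" "\<alpha> < 1" "0 < \<alpha>0" "0 < \<tau>" "K \<ge> 1"
    and "\<forall>k<K. \<theta> k \<ge> 0"
    and "\<forall>k<K. \<forall>j<ns. \<omega> k j \<ge> 0"
    and "\<forall>j<ns. \<exists>k<K. \<omega> k j \<noteq> 0"
    and "model M \<alpha> \<alpha>0 \<tau> K \<theta> ns \<omega> Z eps"
  shows "(\<forall>s::real. s > 0 \<longrightarrow>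
            (\<exists>(N :: (nat \<Rightarrow> real) measure) Z' eps'.
               model N \<alpha> \<alpha>0 \<tau> K (\<lambda>k. \<theta> k / s powr (1 / \<alpha>)) ns (\<lambda>k j. \<omega> k j / s) Z' eps') \<and>
            (\<forall>(N :: 'b measure) Z' eps'.
               model N \<alpha> \<alpha>0 \<tau> K (\<lambda>k. \<theta> k / s powr (1 / \<alpha>)) ns (\<lambda>k j. \<omega> k j / s) Z' eps' \<longrightarrow>
               (\<forall>x. joint_cdf N (Xvar \<alpha> \<alpha>0 K (\<lambda>k j. \<omega> k j / s) Z' eps') ns x
                    = joint_cdf M (Xvar \<alpha> \<alpha>0 K \<omega> Z eps) ns x powr (1 / s))))
         \<and> max_inf_div ns (joint_cdf M (Xvar \<alpha> \<alpha>0 K \<omega> Z eps) ns)"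
proof -
  have rescaled_model_exists: "\<exists>(N :: (nat \<Rightarrow> real) measure) Z' eps'.
      model N \<alpha> \<alpha>0 \<tau> K (\<lambda>k. \<theta> k / s powr (1 / \<alpha>)) ns (\<lambda>k j. \<omega> k j / s) Z' eps'" if "0 < s" for s
    using assms(6) that by (intro model_exists_retilted[OF assms(9)]) auto
  note rescaled_cdf = model_joint_cdf_rescaled[OF assms(1,3,4) _ assms(6,7,8,9)]
  have "max_inf_div ns (joint_cdf M (Xvar \<alpha> \<alpha>0 K \<omega> Z eps) ns)"
    unfolding max_inf_div_def
  proof (intro allI impI)
    fix m :: nat assume "1 \<le> m"
    then have m: "0 < real m" by simp
    then obtain N :: "(nat \<Rightarrow> real) measure" and Z' eps' where
      N: "model N \<alpha> \<alpha>0 \<tau> K (\<lambda>k. \<theta> k / real m powr (1 / \<alpha>)) ns (\<lambda>k j. \<omega> k j / real m) Z' eps'"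
      using rescaled_model_exists by blast
    have "joint_cdf N (Xvar \<alpha> \<alpha>0 K (\<lambda>k j. \<omega> k j / real m) Z' eps') ns
        = (\<lambda>x. joint_cdf M (Xvar \<alpha> \<alpha>0 K \<omega> Z eps) ns x powr (1 / real m))"
      using rescaled_cdf[OF m N] by (simp add: fun_eq_iff)
    with is_joint_cdf_model_Xvar[OF N]
    show "is_joint_cdf ns (\<lambda>x. joint_cdf M (Xvar \<alpha> \<alpha>0 K \<omega> Z eps) ns x powr (1 / real m))"
      by simp
  qed
  then show ?thesis using rescaled_model_exists rescaled_cdf by blast
qed

end
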